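(* Let $k\ge 1$, $\alpha=(\alpha_1,\dots,\alpha_k)\in\mathbb{N}^k$ and $\sigma\in S_k$ a permutation of $\{1,\dots,k\}$. Then for every finite simple undirected graph, $$w_{\alpha_1+\alpha_{\sigma(1)}}\cdots w_{\alpha_k+\alpha_{\sigma(k)}}\le w_{2\alpha_1}\cdots w_{2\alpha_k}.$$
   Context: $\mathbb{N}$ denotes the nonnegative integers. For $j\in\mathbb{N}$, $w_j$ denotes the total number of walks of length $j$ in the graph (a walk is a sequence of vertices in which consecutive vertices are adjacent; vertices and edges may repeat; the length is the number of edges). *)

theory Defs
  imports Main "HOL-Combinatorics.Permutations"
begin

definition simple_graph :: "'a set \<Rightarrow> ('a \<Rightarrow> 'a \<Rightarrow> bool) \<Rightarrow> bool" where
  "simple_graph V E \<longleftrightarrow> finite V \<and> (\<forall>u v. E u v \<longrightarrow> u \<in> V \<and> v \<in> V)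
     \<and> (\<forall>u v. E u v \<longrightarrow> E v u) \<and> (\<forall>v. \<not> E v v)"

definition walks :: "'a set \<Rightarrow> ('a \<Rightarrow> 'a \<Rightarrow> bool) \<Rightarrow> nat \<Rightarrow> 'a list set" where
  "walks V E j = {xs. length xs = Suc j \<and> set xs \<subseteq> V \<and> (\<forall>i < j. E (xs ! i) (xs ! Suc i))}"

definition num_walks :: "'a set \<Rightarrow> ('a \<Rightarrow> 'a \<Rightarrow> bool) \<Rightarrow> nat \<Rightarrow> nat" where
  "num_walks V E j = card (walks V E j)"

end

theory Submission
  imports Defs "HOL-Analysis.Convex"
begin

text \<open>Cutting a walk of length \<open>a + b\<close> at its \<open>a\<close>-th vertex \<open>v\<close> and reversing the first
  piece (the graph is undirected) gives \<open>w (a + b) = (\<Sum>v. f a v * f b v)\<close>, where \<open>f j v\<close>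
  counts the walks of length \<open>j\<close> starting at \<open>v\<close>. By Cauchy-Schwarz,
  \<open>w (a + b)\<^sup>2 \<le> w (2 * a) * w (2 * b)\<close>. Multiplying these inequalities for
  \<open>(a, b) = (\<alpha> i, \<alpha> (\<sigma> i))\<close> and reindexing the second factor by \<open>\<sigma>\<close> bounds the square of
  the left-hand side by the square of the right-hand side.\<close>

lemma walks_eq_successively:
  "walks V E j = {xs. length xs = Suc j \<and> set xs \<subseteq> V \<and> successively E xs}"
  unfolding walks_def successively_conv_nth by auto

lemma finite_walks:
  assumes "finite V"
  shows "finite (walks V E j)"
proof (rule finite_subset)
  show "walks V E j \<subseteq> {xs. set xs \<subseteq> V \<and> length xs = Suc j}"
    unfolding walks_def by auto
  show "finite {xs. set xs \<subseteq> V \<and> length xs = Suc j}"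
    using finite_lists_length_eq[OF assms] .
qed

definition walks_from :: "'a set \<Rightarrow> ('a \<Rightarrow> 'a \<Rightarrow> bool) \<Rightarrow> nat \<Rightarrow> 'a \<Rightarrow> 'a list set" where
  "walks_from V E j v = {xs \<in> walks V E j. hd xs = v}"

definition walks_to :: "'a set \<Rightarrow> ('a \<Rightarrow> 'a \<Rightarrow> bool) \<Rightarrow> nat \<Rightarrow> 'a \<Rightarrow> 'a list set" where
  "walks_to V E j v = {xs \<in> walks V E j. last xs = v}"

lemma rev_in_walks_iff:
  assumes "\<And>u v. E u v \<Longrightarrow> E v u"
  shows "rev xs \<in> walks V E j \<longleftrightarrow> xs \<in> walks V E j"
proof -
  have "successively E (rev xs) \<longleftrightarrow> successively E xs"
    using assms by (auto simp: successively_rev elim: successively_mono)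
  then show ?thesis
    unfolding walks_eq_successively by simp
qed

lemma card_walks_to_eq_card_walks_from:
  assumes "\<And>u v. E u v \<Longrightarrow> E v u"
  shows "card (walks_to V E j v) = card (walks_from V E j v)"
proof (rule bij_betw_same_card)
  show "bij_betw rev (walks_to V E j v) (walks_from V E j v)"
    using rev_in_walks_iff[of E, OF assms]
    by (intro bij_betw_byWitness[where f' = rev])
      (auto simp: walks_to_def walks_from_def hd_rev last_rev)
qed

lemma take_drop_in_walks:
  assumes "xs \<in> walks V E (a + b)"
  shows "take (Suc a) xs \<in> walks_to V E a (xs ! a)" and "drop a xs \<in> walks_from V E b (xs ! a)"
proof -
  have len: "length xs = Suc (a + b)" and "set xs \<subseteq> V" and succ: "successively E xs"
    using assms unfolding walks_eq_successively by auto
  then have "set (take (Suc a) xs) \<subseteq> V" and "set (drop a xs) \<subseteq> V"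
    by (auto dest: in_set_takeD in_set_dropD)
  moreover have "successively E (take (Suc a) xs)" and "successively E (drop a xs)"
    using succ successively_append_iff[of E "take (Suc a) xs" "drop (Suc a) xs"]
      successively_append_iff[of E "take a xs" "drop a xs"] by simp_all
  moreover have "last (take (Suc a) xs) = xs ! a"
    using len by (simp add: take_Suc_conv_app_nth)
  ultimately show "take (Suc a) xs \<in> walks_to V E a (xs ! a)" and "drop a xs \<in> walks_from V E b (xs ! a)"
    using len unfolding walks_to_def walks_from_def walks_eq_successively
    by (simp_all add: hd_drop_conv_nth)
qed

lemma append_tl_in_walks:
  assumes "p \<in> walks_to V E a v" and "q \<in> walks_from V E b v"
  shows "p @ tl q \<in> walks V E (a + b)"
proof -
  have p: "length p = Suc a" "set p \<subseteq> V" "successively E p" "last p = v"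
    and q: "length q = Suc b" "set q \<subseteq> V" "successively E q" "hd q = v"
    using assms unfolding walks_to_def walks_from_def walks_eq_successively by auto
  then obtain q' where q': "q = v # q'"
    by (cases q) auto
  have "successively E (p @ q')"
    using p q q' by (auto simp: successively_append_iff successively_Cons)
  then show ?thesis
    using p q q' unfolding walks_eq_successively by auto
qed

lemma bij_betw_split_walks:
  "bij_betw (\<lambda>xs. (take (Suc a) xs, drop a xs)) (walks V E (a + b))
     (\<Union>v\<in>V. walks_to V E a v \<times> walks_from V E b v)"
proof (rule bij_betw_byWitness[where f' = "\<lambda>(p, q). p @ tl q"])
  show "\<forall>xs\<in>walks V E (a + b). (\<lambda>(p, q). p @ tl q) (take (Suc a) xs, drop a xs) = xs"
    by (simp add: tl_drop flip: drop_Suc)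
  show "\<forall>pq\<in>\<Union>v\<in>V. walks_to V E a v \<times> walks_from V E b v.
          (\<lambda>xs. (take (Suc a) xs, drop a xs)) ((\<lambda>(p, q). p @ tl q) pq) = pq"
  proof
    fix pq assume "pq \<in> (\<Union>v\<in>V. walks_to V E a v \<times> walks_from V E b v)"
    then obtain v p q where pq: "pq = (p, q)" and "p \<in> walks_to V E a v" "q \<in> walks_from V E b v"
      by blast
    then have "length p = Suc a" "last p = v" "length q = Suc b" "hd q = v"
      unfolding walks_to_def walks_from_def walks_def by auto
    moreover from this obtain p' q' where "p = p' @ [v]" and "q = v # q'"
      by (metis append_butlast_last_id list.collapse list.size(3) nat.simps(3))
    ultimately show "(\<lambda>xs. (take (Suc a) xs, drop a xs)) ((\<lambda>(p, q). p @ tl q) pq) = pq"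
      using pq by simp
  qed
  show "(\<lambda>xs. (take (Suc a) xs, drop a xs)) ` walks V E (a + b)
          \<subseteq> (\<Union>v\<in>V. walks_to V E a v \<times> walks_from V E b v)"
  proof clarify
    fix xs assume xs: "xs \<in> walks V E (a + b)"
    then have "xs ! a \<in> V"
      unfolding walks_def by (auto simp: subset_iff)
    then show "(take (Suc a) xs, drop a xs) \<in> (\<Union>v\<in>V. walks_to V E a v \<times> walks_from V E b v)"
      using take_drop_in_walks[OF xs] by blast
  qed
  show "(\<lambda>(p, q). p @ tl q) ` (\<Union>v\<in>V. walks_to V E a v \<times> walks_from V E b v) \<subseteq> walks V E (a + b)"
    using append_tl_in_walks by fast
qed

lemma num_walks_add:
  assumes "finite V"
  shows "num_walks V E (a + b) = (\<Sum>v\<in>V. card (walks_to V E a v) * card (walks_from V E b v))"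
proof -
  have "num_walks V E (a + b) = card (\<Union>v\<in>V. walks_to V E a v \<times> walks_from V E b v)"
    unfolding num_walks_def using bij_betw_split_walks by (rule bij_betw_same_card)
  also have "\<dots> = (\<Sum>v\<in>V. card (walks_to V E a v \<times> walks_from V E b v))"
    using assms finite_walks[OF assms]
    by (intro card_UN_disjoint) (auto simp: walks_to_def walks_from_def)
  finally show ?thesis
    by (simp add: card_cartesian_product)
qed

lemma num_walks_add_sq_le:
  assumes "finite V" and "\<And>u v. E u v \<Longrightarrow> E v u"
  shows "(num_walks V E (a + b))\<^sup>2 \<le> num_walks V E (2 * a) * num_walks V E (2 * b)"
proof -
  define f where "f j v = real (card (walks_from V E j v))" for j v
  have split: "real (num_walks V E (i + j)) = (\<Sum>v\<in>V. f i v * f j v)" for i j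
    using num_walks_add[OF assms(1), of E i j] card_walks_to_eq_card_walks_from[of E, OF assms(2)]
    by (simp add: f_def)
  have "real ((num_walks V E (a + b))\<^sup>2) \<le> (\<Sum>v\<in>V. (f a v)\<^sup>2) * (\<Sum>v\<in>V. (f b v)\<^sup>2)"
    using Cauchy_Schwarz_ineq_sum[where a = "f a" and b = "f b" and I = V] split by simp
  also have "\<dots> = real (num_walks V E (2 * a) * num_walks V E (2 * b))"
    using split by (simp add: mult_2 power2_eq_square)
  finally show ?thesis
    by (simp only: of_nat_le_iff)
qed

lemma prod_permutes_le_prod_diag:
  fixes K :: "'b \<Rightarrow> 'b \<Rightarrow> 'c::linordered_semidom"
  assumes "\<sigma> permutes S"
    and nonneg: "\<And>i j. i \<in> S \<Longrightarrow> j \<in> S \<Longrightarrow> 0 \<le> K i j"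
    and sq_le: "\<And>i j. i \<in> S \<Longrightarrow> j \<in> S \<Longrightarrow> (K i j)\<^sup>2 \<le> K i i * K j j"
  shows "(\<Prod>i\<in>S. K i (\<sigma> i)) \<le> (\<Prod>i\<in>S. K i i)"
proof (rule power2_le_imp_le)
  have \<sigma>_in: "\<sigma> i \<in> S" if "i \<in> S" for i
    using assms(1) that by (rule permutes_in_image[THEN iffD2])
  have "(\<Prod>i\<in>S. K i (\<sigma> i))\<^sup>2 = (\<Prod>i\<in>S. (K i (\<sigma> i))\<^sup>2)"
    by (rule prod_power_distrib)
  also have "\<dots> \<le> (\<Prod>i\<in>S. K i i * K (\<sigma> i) (\<sigma> i))"
    using \<sigma>_in by (intro prod_mono) (simp add: nonneg sq_le)
  also have "\<dots> = (\<Prod>i\<in>S. K i i) * (\<Prod>i\<in>S. K (\<sigma> i) (\<sigma> i))"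
    by (rule prod.distrib)
  also have "(\<Prod>i\<in>S. K (\<sigma> i) (\<sigma> i)) = (\<Prod>i\<in>S. K i i)"
    using prod.permute[OF assms(1), of "\<lambda>i. K i i"] by (simp add: comp_def)
  finally show "(\<Prod>i\<in>S. K i (\<sigma> i))\<^sup>2 \<le> (\<Prod>i\<in>S. K i i)\<^sup>2"
    by (simp add: power2_eq_square)
  show "0 \<le> (\<Prod>i\<in>S. K i i)"
    using nonneg by (simp add: prod_nonneg)
qed

theorem theorem3:
  fixes V :: "'a set" and E :: "'a \<Rightarrow> 'a \<Rightarrow> bool"
    and k :: nat and \<alpha> :: "nat \<Rightarrow> nat" and \<sigma> :: "nat \<Rightarrow> nat"
  assumes "k \<ge> 1"
    and "\<sigma> permutes {1..k}"
    and "simple_graph V E"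
  shows "(\<Prod>i=1..k. num_walks V E (\<alpha> i + \<alpha> (\<sigma> i))) \<le> (\<Prod>i=1..k. num_walks V E (2 * \<alpha> i))"
proof -
  have "finite V" and sym: "\<And>u v. E u v \<Longrightarrow> E v u"
    using assms(3) unfolding simple_graph_def by blast+
  have "(\<Prod>i=1..k. num_walks V E (\<alpha> i + \<alpha> (\<sigma> i))) \<le> (\<Prod>i=1..k. num_walks V E (\<alpha> i + \<alpha> i))"
    using num_walks_add_sq_le[OF \<open>finite V\<close> sym]
    by (intro prod_permutes_le_prod_diag[OF assms(2)]) (simp_all add: mult_2)
  then show ?thesis
    by (simp add: mult_2)
qed

end
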